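(* Suppose $f:\{0,1\}^n\to\mathbb{R}$ is submodular and $f(0)>0$. Then there are at least $2^{n-1}$ points $x\in\{0,1\}^n$ such that $f(x)\neq 0$.
   Context: $f$ is submodular if $f(x+\mathbf{e}_i)-f(x)\ge f(y+\mathbf{e}_i)-f(y)$ for all $i$ and all $x\le y$ (coordinatewise) with $x_i=y_i=0$, where $\mathbf{e}_i$ is the $i$-th standard basis vector. *)

theory Defs
  imports "HOL-Analysis.Analysis"
begin

text \<open>The Boolean cube {0,1}^n: functions nat => nat with values in {0,1} on
coordinates 0..n-1 and value 0 outside (so the representation is unique).\<close>
definition cube :: "nat \<Rightarrow> (nat \<Rightarrow> nat) set" where
  "cube n = {x. (\<forall>i<n. x i \<in> {0, 1}) \<and> (\<forall>i\<ge>n. x i = 0)}"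

definition unit_vec :: "nat \<Rightarrow> nat \<Rightarrow> nat" where
  "unit_vec i = (\<lambda>j. if j = i then 1 else 0)"

definition submodular :: "nat \<Rightarrow> ((nat \<Rightarrow> nat) \<Rightarrow> real) \<Rightarrow> bool" where
  "submodular n f \<longleftrightarrow>
     (\<forall>i<n. \<forall>x\<in>cube n. \<forall>y\<in>cube n.
        x \<le> y \<and> x i = 0 \<and> y i = 0 \<longrightarrow>
        f (\<lambda>j. x j + unit_vec i j) - f x \<ge> f (\<lambda>j. y j + unit_vec i j) - f y)"

end

theory Submission
  imports Defs
begin

text \<open>Induct over the coordinates, counting nonzero values on the subcube of points that agree
with a base point \<open>z\<close> from coordinate \<open>k\<close> on, where \<open>z\<close> vanishes below \<open>k\<close> and \<open>f z > 0\<close>. This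
subcube splits along coordinate \<open>k\<close> into the halves based at \<open>z\<close> and at \<open>z + e\<^sub>k\<close>. If
\<open>f (z + e\<^sub>k) > 0\<close>, induction applies to both halves. Otherwise the marginal gain at \<open>z\<close> is
negative, so by submodularity so is the marginal gain \<open>f (x + e\<^sub>k) - f x\<close> at every \<open>x\<close> of the
lower half; hence \<open>f\<close> is nonzero at \<open>x\<close> or at \<open>x + e\<^sub>k\<close>, giving \<open>2\<^sup>k\<close> nonzero points.\<close>

definition add_unit :: "nat \<Rightarrow> (nat \<Rightarrow> nat) \<Rightarrow> nat \<Rightarrow> nat" where
  "add_unit k x = (\<lambda>j. x j + unit_vec k j)"

definition subcube :: "nat \<Rightarrow> nat \<Rightarrow> (nat \<Rightarrow> nat) \<Rightarrow> (nat \<Rightarrow> nat) set" where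
  "subcube n k z = {x \<in> cube n. \<forall>j\<ge>k. x j = z j}"

lemma finite_cube: "finite (cube n)"
proof -
  have "cube n \<subseteq> (\<lambda>s j. if j \<in> s then 1 else 0) ` Pow {..<n}"
  proof
    fix x assume x: "x \<in> cube n"
    have "x = (\<lambda>j. if j \<in> {j. j < n \<and> x j = 1} then 1 else 0)"
    proof
      fix j show "x j = (if j \<in> {j. j < n \<and> x j = 1} then 1 else 0)"
        using x unfolding cube_def by (cases "j < n") auto
    qed
    then show "x \<in> (\<lambda>s j. if j \<in> s then 1 else 0) ` Pow {..<n}" by blast
  qed
  then show ?thesis by (rule finite_subset) auto
qed

lemma finite_subcube: "finite (subcube n k z)"
  unfolding subcube_def using finite_cube by auto

lemma inj_on_add_unit: "inj_on (add_unit k) A"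
  by (rule inj_onI) (metis add_right_cancel add_unit_def ext)

lemma add_unit_apply_same [simp]: "add_unit k x k = x k + 1"
  by (simp add: add_unit_def unit_vec_def)

lemma add_unit_apply_other [simp]: "j \<noteq> k \<Longrightarrow> add_unit k x j = x j"
  by (simp add: add_unit_def unit_vec_def)

lemma add_unit_in_cube: "x \<in> cube n \<Longrightarrow> k < n \<Longrightarrow> x k = 0 \<Longrightarrow> add_unit k x \<in> cube n"
  unfolding cube_def add_unit_def unit_vec_def by auto

lemma submodularD:
  assumes "submodular n f" "k < n" "x \<in> cube n" "y \<in> cube n" "x \<le> y" "x k = 0" "y k = 0"
  shows "f (add_unit k y) - f y \<le> f (add_unit k x) - f x"
  using assms unfolding submodular_def add_unit_def by blast

lemma subcube_0: "z \<in> cube n \<Longrightarrow> subcube n 0 z = {z}"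
  unfolding subcube_def by auto

lemma subcube_self: "z \<in> cube n \<Longrightarrow> subcube n n z = cube n"
  unfolding subcube_def cube_def by auto

lemma base_le_subcube:
  assumes "\<forall>j<k. z j = 0" "x \<in> subcube n k z"
  shows "z \<le> x"
  unfolding le_fun_def
proof
  fix j show "z j \<le> x j"
    using assms unfolding subcube_def by (cases "j < k") auto
qed

lemma subcube_Suc:
  assumes "k < n" "z k = 0"
  shows "subcube n (Suc k) z = subcube n k z \<union> subcube n k (add_unit k z)"
proof (intro equalityI subsetI)
  fix x assume x: "x \<in> subcube n (Suc k) z"
  then have "x k = 0 \<or> x k = 1" "\<forall>j>k. x j = z j"
    using \<open>k < n\<close> unfolding subcube_def cube_def by auto
  then show "x \<in> subcube n k z \<union> subcube n k (add_unit k z)"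
    using x \<open>z k = 0\<close> unfolding subcube_def by (auto simp: le_less)
qed (auto simp: subcube_def)

lemma subcube_add_unit:
  assumes "k < n" "z k = 0"
  shows "subcube n k (add_unit k z) = add_unit k ` subcube n k z"
proof (intro equalityI subsetI)
  fix x assume x: "x \<in> subcube n k (add_unit k z)"
  define y where "y = x(k := 0)"
  have "x k = 1" using x \<open>z k = 0\<close> unfolding subcube_def by auto
  then have "x = add_unit k y"
    unfolding y_def by (auto simp: add_unit_def unit_vec_def)
  moreover have "y \<in> subcube n k z"
    using x \<open>z k = 0\<close> unfolding subcube_def cube_def y_def by auto
  ultimately show "x \<in> add_unit k ` subcube n k z" by blast
next
  fix x assume "x \<in> add_unit k ` subcube n k z"
  then obtain y where y: "y \<in> subcube n k z" "x = add_unit k y" by blast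
  then have "y k = 0" using \<open>z k = 0\<close> unfolding subcube_def by auto
  then show "x \<in> subcube n k (add_unit k z)"
    using y assms add_unit_in_cube[of y n k] unfolding subcube_def
    by (auto simp: add_unit_def)
qed

lemma subcube_disjoint_add_unit:
  "z k = 0 \<Longrightarrow> subcube n k z \<inter> subcube n k (add_unit k z) = {}"
  unfolding subcube_def by auto

lemma card_subcube:
  "k \<le> n \<Longrightarrow> z \<in> cube n \<Longrightarrow> \<forall>j<k. z j = 0 \<Longrightarrow> card (subcube n k z) = 2 ^ k"
proof (induction k)
  case 0
  then show ?case by (simp add: subcube_0)
next
  case (Suc k)
  then have "k < n" "z k = 0" by auto
  have "card (subcube n k (add_unit k z)) = card (subcube n k z)"
    using subcube_add_unit[of k n z] Suc.prems inj_on_add_unit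
    by (simp add: card_image)
  then show ?case
    using Suc subcube_Suc[of k n z] subcube_disjoint_add_unit[of z k n]
    by (simp add: card_Un_disjoint finite_subcube)
qed

lemma card_le_card_filter_pairs:
  assumes "finite A" "inj_on h A" "A \<inter> h ` A = {}" "\<And>x. x \<in> A \<Longrightarrow> P x \<or> P (h x)"
  shows "card A \<le> card {y \<in> A \<union> h ` A. P y}"
proof -
  define g where "g x = (if P x then x else h x)" for x
  have "inj_on g A"
  proof (rule inj_onI)
    fix x y assume "x \<in> A" "y \<in> A" "g x = g y"
    then show "x = y"
      using assms(2,3) unfolding g_def inj_on_def by (auto split: if_splits)
  qed
  moreover have "g ` A \<subseteq> {y \<in> A \<union> h ` A. P y}"
    using assms(4) unfolding g_def by auto
  ultimately show ?thesis
    using assms(1) by (intro card_inj_on_le) auto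
qed

lemma card_nonzero_subcube:
  assumes "submodular n f"
  shows "k \<le> n \<Longrightarrow> z \<in> cube n \<Longrightarrow> \<forall>j<k. z j = 0 \<Longrightarrow> f z > 0 \<Longrightarrow>
    2 ^ (k - 1) \<le> card {x \<in> subcube n k z. f x \<noteq> 0}"
proof (induction k arbitrary: z)
  case 0
  then have "{x \<in> subcube n 0 z. f x \<noteq> 0} = {z}" by (auto simp: subcube_0)
  then show ?case by simp
next
  case (Suc k)
  then have "k < n" and zk: "z k = 0" and below: "\<forall>j<k. z j = 0" by auto
  let ?S = "subcube n k z" and ?T = "subcube n k (add_unit k z)"
  have split: "subcube n (Suc k) z = ?S \<union> ?T" and disjoint: "?S \<inter> ?T = {}"
    and image: "?T = add_unit k ` ?S"
    using subcube_Suc[of k n z] subcube_disjoint_add_unit[of z k n] subcube_add_unit[of k n z]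
      \<open>k < n\<close> zk by simp_all
  show ?case
  proof (cases "f (add_unit k z) > 0")
    case True
    have "add_unit k z \<in> cube n" "\<forall>j<k. add_unit k z j = 0"
      using add_unit_in_cube[OF Suc.prems(2) \<open>k < n\<close> zk] below by auto
    then have "2 ^ (k - 1) \<le> card {x \<in> ?T. f x \<noteq> 0}"
      using Suc.IH True \<open>k < n\<close> by simp
    moreover have "2 ^ (k - 1) \<le> card {x \<in> ?S. f x \<noteq> 0}"
      using Suc by simp
    moreover have "{x \<in> subcube n (Suc k) z. f x \<noteq> 0}
        = {x \<in> ?S. f x \<noteq> 0} \<union> {x \<in> ?T. f x \<noteq> 0}"
      unfolding split by blast
    then have "card {x \<in> subcube n (Suc k) z. f x \<noteq> 0}
        = card {x \<in> ?S. f x \<noteq> 0} + card {x \<in> ?T. f x \<noteq> 0}"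
      using disjoint by (simp add: card_Un_disjoint finite_subcube disjoint_iff)
    moreover have "(2::nat) ^ (Suc k - 1) \<le> 2 ^ (k - 1) + 2 ^ (k - 1)"
      by (cases k) auto
    ultimately show ?thesis by simp
  next
    case False
    have "f x \<noteq> 0 \<or> f (add_unit k x) \<noteq> 0" if "x \<in> ?S" for x
    proof -
      have "x \<in> cube n" "x k = 0" using that zk unfolding subcube_def by auto
      then have "f (add_unit k x) - f x \<le> f (add_unit k z) - f z"
        using submodularD[OF assms \<open>k < n\<close> Suc.prems(2)] base_le_subcube[OF below that] zk
        by blast
      then show ?thesis using False Suc.prems(4) by auto
    qed
    then have "card ?S \<le> card {x \<in> subcube n (Suc k) z. f x \<noteq> 0}"
      unfolding split image using disjoint image inj_on_add_unit
      by (intro card_le_card_filter_pairs) (auto simp: finite_subcube)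
    moreover have "card ?S = 2 ^ k"
      using card_subcube[of k n z] Suc.prems by simp
    ultimately show ?thesis by simp
  qed
qed

theorem lemma6:
  fixes n :: nat and f :: "(nat \<Rightarrow> nat) \<Rightarrow> real"
  assumes "submodular n f"
    and "f (\<lambda>_. 0) > 0"
  shows "card {x \<in> cube n. f x \<noteq> 0} \<ge> 2 ^ (n - 1)"
proof -
  have "(\<lambda>_. 0) \<in> cube n" unfolding cube_def by auto
  then show ?thesis
    using card_nonzero_subcube[OF assms(1) le_refl _ _ assms(2)] by (simp add: subcube_self)
qed

end
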